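(* Under the setting below, with positive step sizes $\eta_t$, let $\lambda^*\in[0,\pi]$ minimize $\sum_{t=1}^TL_t(x_t^*,z_t^*,\lambda)$ over $\lambda\in[0,\pi]$. Then the shadow prices $\hat\lambda_t$ generated by strategy $\mathcal A$ satisfy $$G:=\sum_{t=1}^T\big[L_t(x^*_t,z^*_t,\lambda^* )-L_t(x^*_t,z^*_t,\hat\lambda_t)\big]\le\Xi\Psi\sum_{t=1}^T\eta_t.$$
   Context: Fix an integer $T\ge 1$, a data cap $Q>0$ and an overage fee $\pi>0$; let $q=Q/T$. Fix constants $\bar d\ge 0$, $\bar r\ge 0$. For each $t\in\{1,\dots,T\}$ fix reals $d_t\in[0,\bar d]$, $r_t\in[0,\bar r]$, $c_t>0$, $p_t>0$, $\theta_t>0$, $\beta_t>0$ and functions $u_t,e_t:[0,\infty)\to\mathbb{R}$ such that: $u_t$ is continuous, increasing and strictly concave, differentiable on $(0,\infty)$, and $u_t':(0,\infty)\to(0,\infty)$ is a strictly decreasing bijection with inverse $u_t'^{-1}$; $e_t$ is increasing, strictly convex and continuously differentiable, and $e_t':[0,\infty)\to[0,\infty)$ is a strictly increasing bijection with inverse $e_t'^{-1}$. For $0\le z\le x\le 1$ let $\tilde f_t(x,z)=\theta_t u_t(x)-\beta_t e_t((x-z)c_t)-p_t c_t z$ and $\tilde h_t(x,z)=d_t x+r_t z$, and $L_t(x,z,\lambda)=\tilde f_t(x,z)-\lambda(\tilde h_t(x,z)-q)$. Define $\tilde S(x,z)=\sum_{t=1}^T\tilde f_t(x_t,z_t)-\pi\big[\sum_{t=1}^T\tilde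 h_t(x_t,z_t)-Q\big]^+$ and let $(x^*,z^* )$ be a maximizer of $\tilde S$ over $\{0\le z_t\le x_t\le 1\ \forall t\}$. For $\lambda\ge 0$ and $\beta>0$ write $a_t(\beta,\lambda)=\frac{1}{c_t}\,e_t'^{-1}\!\Big(\frac{p_tc_t+r_t\lambda}{\beta c_t}\Big)$ and $X_t(\lambda)=p_tc_t+(d_t+r_t)\lambda$. Define the sets (all with $\beta>0$): $\Omega^{I}_t(\lambda)=\{(\beta,\theta):\theta>\frac{\beta c_t e_t'(c_t)+d_t\lambda}{u_t'(1)},\ \beta<\frac{p_tc_t+r_t\lambda}{c_te_t'(c_t)}\}$; $\Omega^{II}_t(\lambda)=\{(\beta,\theta):\theta>\frac{X_t(\lambda)}{u_t'(1)},\ \beta\ge\frac{p_tc_t+r_t\lambda}{c_te_t'(c_t)}\}$; $\Omega^{III}_t(\lambda)=\{(\beta,\theta):\frac{X_t(\lambda)}{u_t'(a_t(\beta,\lambda))}\le\theta\le\frac{X_t(\lambda)}{u_t'(1)}\}$; $\Omega^{IV}_t(\lambda)=\{(\beta,\theta):\theta<\frac{X_t(\lambda)}{u_t'(a_t(\beta,\lambda))},\ \theta\le\frac{\beta c_te_t'(c_t)+d_t\lambda}{u_t'(1)}\}$. Let $z^{II}_t(\lambda)=1-a_t(\beta_t,\lambda)$, $x^{III}_t(\lambda)=u_t'^{-1}(X_t(\lambda)/\theta_t)$, $z^{III}_t(\lambda)=x^{III}_t(\lambda)-a_t(\beta_t,\lambda)$, and let $x^{IV}_t(\lambda)\in(0,1]$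 be the solution of $\theta_tu_t'(x)-\beta_tc_te_t'(xc_t)=d_t\lambda$. Define $W_t(\lambda)=(1,0)$ if $(\beta_t,\theta_t)\in\Omega^I_t(\lambda)$; $(1,z^{II}_t(\lambda))$ if in $\Omega^{II}_t(\lambda)$; $(x^{III}_t(\lambda),z^{III}_t(\lambda))$ if in $\Omega^{III}_t(\lambda)$; $(x^{IV}_t(\lambda),0)$ if in $\Omega^{IV}_t(\lambda)$. Online strategy $\mathcal A$: set $\hat\lambda_1=0$; for $t=1,\dots,T$ set $(\hat x_t,\hat z_t)=W_t(\hat\lambda_t)$ and $\hat\lambda_{t+1}=\mathcal P_{[0,\pi]}\big(\hat\lambda_t+\eta_t[\tilde h_t(\hat x_t,\hat z_t)-q]\big)$, where $\mathcal P_{[0,\pi]}$ is the projection onto $[0,\pi]$. Maximal demand divergence: $\Xi=\max(|q-\bar d-\bar r|,q)$. Consumption fluctuation: with $l_t=q-\tilde h_t(x_t^*,z_t^* )$, $\bar l=\frac1T\sum_{t=1}^Tl_t$, $\psi_t=|t\bar l-\sum_{i=1}^tl_i|$, set $\Psi=\max_{1\le t\le T}\psi_t$. *)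

theory Defs
  imports "HOL-Analysis.Analysis"
begin

definition strict_convex_on :: "real set \<Rightarrow> (real \<Rightarrow> real) \<Rightarrow> bool" where
  "strict_convex_on S f \<longleftrightarrow> convex S \<and>
    (\<forall>x\<in>S. \<forall>y\<in>S. \<forall>v. x \<noteq> y \<and> 0 < v \<and> v < 1 \<longrightarrow>
       f ((1 - v) * x + v * y) < (1 - v) * f x + v * f y)"

definition strict_concave_on :: "real set \<Rightarrow> (real \<Rightarrow> real) \<Rightarrow> bool" where
  "strict_concave_on S f \<longleftrightarrow> strict_convex_on S (\<lambda>x. - f x)"

text \<open>a_t(beta,lambda); de is e_t' (with inverse taken on [0,inf)).\<close>
definition a_fun :: "real \<Rightarrow> real \<Rightarrow> real \<Rightarrow> (real \<Rightarrow> real) \<Rightarrow> real \<Rightarrow> real \<Rightarrow> real" where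
  "a_fun c p r de beta lam = (1 / c) * inv_into {0..} de ((p * c + r * lam) / (beta * c))"

definition X_fun :: "real \<Rightarrow> real \<Rightarrow> real \<Rightarrow> real \<Rightarrow> real \<Rightarrow> real" where
  "X_fun c p d r lam = p * c + (d + r) * lam"

text \<open>The decision rule W_t(lambda). Regions I, II, III are tested in turn; otherwise the
  parameters lie in region IV (the four regions cover all (beta,theta) with beta > 0).
  du is u_t', de is e_t'.\<close>
definition W :: "real \<Rightarrow> real \<Rightarrow> real \<Rightarrow> real \<Rightarrow> real \<Rightarrow> real \<Rightarrow>
    (real \<Rightarrow> real) \<Rightarrow> (real \<Rightarrow> real) \<Rightarrow> real \<Rightarrow> real \<times> real" where
  "W d r c p theta beta du de lam =
    (let a = a_fun c p r de beta lam;
         X = X_fun c p d r lam;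
         thr = (p * c + r * lam) / (c * de c)
     in if theta > (beta * c * de c + d * lam) / du 1 \<and> beta < thr then (1, 0)
        else if theta > X / du 1 \<and> beta \<ge> thr then (1, 1 - a)
        else if X / du a \<le> theta \<and> theta \<le> X / du 1 then
          (inv_into {0<..} du (X / theta), inv_into {0<..} du (X / theta) - a)
        else (THE x. 0 < x \<and> x \<le> 1 \<and> theta * du x - beta * c * de (x * c) = d * lam, 0))"

definition proj :: "real \<Rightarrow> real \<Rightarrow> real" where
  "proj b y = max 0 (min b y)"

end

theory Submission imports Defs begin

text \<open>
  Since \<open>L\<^sub>t\<close> is affine in \<open>\<lambda>\<close>, the t-th summand of G is \<open>(\<lambda>\<^sup>* - \<lambda>\<^sub>t) l\<^sub>t\<close>, where
  \<open>\<lambda>\<^sub>t\<close> are the online prices. Write \<open>l\<^sub>t = m + (s\<^sub>t - s\<^sub>t\<^sub>-\<^sub>1)\<close> with the mean m of the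
  \<open>l\<^sub>t\<close> and the partial-sum fluctuations \<open>s\<^sub>t = l\<^sub>1 + \<dots> + l\<^sub>t - t m\<close>, which vanish at
  \<open>t = 0\<close> and \<open>t = T\<close> and are bounded by \<open>\<Psi>\<close>. The mean part is nonpositive because
  \<open>\<lambda>\<^sup>*\<close> minimises \<open>\<lambda> T m\<close> over \<open>[0, \<pi>]\<close>. Summation by parts turns the fluctuation part
  into \<open>\<Sum> (\<lambda>\<^sub>t\<^sub>+\<^sub>1 - \<lambda>\<^sub>t) s\<^sub>t\<close>, and every price step is at most \<open>\<eta>\<^sub>t \<Xi>\<close>: the projection
  onto \<open>[0, \<pi>]\<close> is nonexpansive, and the decision rule always returns a feasible point,
  whose consumption lies within \<open>\<Xi>\<close> of q.
\<close>

lemma sum_by_parts_atLeastAtMost: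
  fixes a s :: "nat \<Rightarrow> 'a::comm_ring"
  shows "(\<Sum>t=1..n. a t * (s t - s (t - 1)))
           = a (n + 1) * s n - a 1 * s 0 + (\<Sum>t=1..n. (a t - a (t + 1)) * s t)"
  by (induction n) (simp_all add: algebra_simps)

lemma proj_range: "0 \<le> b \<Longrightarrow> 0 \<le> proj b y \<and> proj b y \<le> b"
  by (auto simp: proj_def)

lemma proj_dist_le: "0 \<le> z \<Longrightarrow> z \<le> b \<Longrightarrow> \<bar>proj b y - z\<bar> \<le> \<bar>y - z\<bar>"
  by (auto simp: proj_def)

lemma projected_recursion_range:
  assumes "0 \<le> b" "lam 1 = 0"
    and step: "\<forall>t::nat\<in>{1..T}. lam (t + 1) = proj b (g t)"
    and "t \<in> {1..T}"
  shows "0 \<le> lam t \<and> lam t \<le> b"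
proof (cases "t = 1")
  case False
  then have "t = (t - 1) + 1" "t - 1 \<in> {1..T}" using \<open>t \<in> {1..T}\<close> by auto
  then show ?thesis using step proj_range[OF \<open>0 \<le> b\<close>] by metis
qed (use assms in simp)

lemma projected_step_le:
  assumes "0 \<le> lam" "lam \<le> b" "0 \<le> eta" "\<bar>g\<bar> \<le> Xi"
  shows "\<bar>proj b (lam + eta * g) - lam\<bar> \<le> eta * Xi"
proof -
  have "\<bar>proj b (lam + eta * g) - lam\<bar> \<le> eta * \<bar>g\<bar>"
    using proj_dist_le[of lam b "lam + eta * g"] assms by (simp add: abs_mult)
  also have "\<dots> \<le> eta * Xi" using assms by (simp add: mult_left_mono)
  finally show ?thesis .
qed

lemma price_regret_le:
  fixes l lam eta :: "nat \<Rightarrow> real"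
  assumes "T \<ge> 1"
    and lam_range: "\<forall>t\<in>{1..T}. 0 \<le> lam t \<and> lam t \<le> b"
    and lamstar_min: "\<forall>y. 0 \<le> y \<and> y \<le> b \<longrightarrow> lamstar * (\<Sum>t=1..T. l t) \<le> y * (\<Sum>t=1..T. l t)"
    and steps: "\<forall>t\<in>{1..T}. \<bar>lam (t + 1) - lam t\<bar> \<le> eta t * Xi"
    and fluct: "\<forall>t\<in>{1..T}. \<bar>real t * ((\<Sum>i=1..T. l i) / T) - (\<Sum>i=1..t. l i)\<bar> \<le> Psi"
  shows "(\<Sum>t=1..T. (lamstar - lam t) * l t) \<le> Xi * Psi * (\<Sum>t=1..T. eta t)"
proof -
  define lbar where "lbar = (\<Sum>i=1..T. l i) / T"
  define s where "s t = (\<Sum>i=1..t. l i) - real t * lbar" for t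
  have "s 0 = 0" "s T = 0" unfolding s_def lbar_def using \<open>T \<ge> 1\<close> by simp_all
  have l_split: "l t = lbar + (s t - s (t - 1))" if "t \<ge> 1" for t
  proof -
    from \<open>t \<ge> 1\<close> obtain m where t: "t = Suc m" by (cases t) auto
    have "s t - s (t - 1) = l t - lbar" unfolding s_def t by (simp add: algebra_simps)
    then show ?thesis by simp
  qed
  have "real T * lbar = (\<Sum>i=1..T. l i)" unfolding lbar_def using \<open>T \<ge> 1\<close> by simp
  have mean_part: "lbar * (lamstar - lam t) \<le> 0" if "t \<in> {1..T}" for t
  proof -
    have "lamstar * (real T * lbar) \<le> lam t * (real T * lbar)"
      using lamstar_min lam_range that \<open>real T * lbar = _\<close> by simp
    then have "real T * (lbar * (lamstar - lam t)) \<le> 0" by (simp add: algebra_simps)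
    then show ?thesis using \<open>T \<ge> 1\<close> by (simp add: mult_le_0_iff)
  qed
  have fluct_part: "(lam (t + 1) - lam t) * s t \<le> eta t * Xi * Psi" if "t \<in> {1..T}" for t
  proof -
    have "\<bar>s t\<bar> \<le> Psi" using fluct that unfolding s_def lbar_def by (simp add: abs_minus_commute)
    have "(lam (t + 1) - lam t) * s t \<le> \<bar>lam (t + 1) - lam t\<bar> * \<bar>s t\<bar>"
      by (metis abs_ge_self abs_mult)
    also have "\<dots> \<le> eta t * Xi * Psi"
      using steps that \<open>\<bar>s t\<bar> \<le> Psi\<close> by (meson abs_ge_zero atLeastAtMost_iff mult_mono order_trans)
    finally show ?thesis .
  qed
  have "(\<Sum>t=1..T. (lamstar - lam t) * l t)
      = (\<Sum>t=1..T. lbar * (lamstar - lam t)) + (\<Sum>t=1..T. (lamstar - lam t) * (s t - s (t - 1)))"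
    unfolding sum.distrib[symmetric] by (intro sum.cong refl) (simp add: l_split algebra_simps)
  also have "(\<Sum>t=1..T. (lamstar - lam t) * (s t - s (t - 1))) = (\<Sum>t=1..T. (lam (t + 1) - lam t) * s t)"
    using sum_by_parts_atLeastAtMost[of "\<lambda>t. lamstar - lam t" s T] \<open>s 0 = 0\<close> \<open>s T = 0\<close>
    by (simp add: algebra_simps)
  also have "(\<Sum>t=1..T. lbar * (lamstar - lam t)) \<le> 0"
    using mean_part by (intro sum_nonpos) auto
  also have "(\<Sum>t=1..T. (lam (t + 1) - lam t) * s t) \<le> (\<Sum>t=1..T. eta t * Xi * Psi)"
    using fluct_part by (intro sum_mono) auto
  finally show ?thesis by (simp add: sum_distrib_left algebra_simps)
qed

lemma continuous_on_strict_antimono_onto: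
  fixes f :: "real \<Rightarrow> real"
  assumes anti: "strict_antimono_on {0<..} f" and onto: "f ` {0<..} = {0<..}"
  shows "continuous_on {0<..} f"
  unfolding continuous_on_iff
proof (intro ballI allI impI)
  fix x e :: real assume x: "x \<in> {0<..}" and "e > 0"
  have less: "f b < f a" if "0 < a" "a < b" for a b
    using monotone_onD[OF anti] that by simp
  have "f x > 0" using x onto by auto
  have "f x + e/2 \<in> f ` {0<..}" "max (f x / 2) (f x - e/2) \<in> f ` {0<..}"
    using onto \<open>f x > 0\<close> \<open>e > 0\<close> by auto
  then obtain a b where a: "a > 0" "f a = f x + e/2" and b: "b > 0" "f b = max (f x / 2) (f x - e/2)"
    by auto
  have "a < x"
    using less[of x a] a x \<open>e > 0\<close> by (cases a x rule: linorder_cases) auto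
  have "x < b"
    using less[of b x] b x \<open>e > 0\<close> \<open>f x > 0\<close> by (cases b x rule: linorder_cases) auto
  show "\<exists>d>0. \<forall>x'\<in>{0<..}. dist x' x < d \<longrightarrow> dist (f x') (f x) < e"
  proof (intro exI[of _ "min (x - a) (b - x)"] conjI ballI impI)
    show "0 < min (x - a) (b - x)" using \<open>a < x\<close> \<open>x < b\<close> by auto
    fix x' :: real assume "x' \<in> {0<..}" "dist x' x < min (x - a) (b - x)"
    then have "f x' < f a" "f b < f x'" using less[of a x'] less[of x' b] a b
      by (auto simp: dist_real_def)
    then show "dist (f x') (f x) < e" using a b \<open>e > 0\<close> by (auto simp: dist_real_def)
  qed
qed

lemma strict_mono_onto_zero:
  fixes f :: "real \<Rightarrow> real"
  assumes mono: "strict_mono_on {0..} f" and onto: "f ` {0..} = {0..}"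
  shows "f 0 = 0"
proof -
  obtain w where "w \<ge> 0" "f w = 0" using onto by (metis atLeast_iff imageE order_refl)
  moreover have "f 0 \<ge> 0" using onto by auto
  ultimately show ?thesis
    using strict_mono_onD[OF mono, of 0 w] by (cases "w = 0") auto
qed

lemma inv_into_strict_antimono_between:
  fixes f :: "real \<Rightarrow> real"
  assumes anti: "strict_antimono_on {0<..} f" and onto: "f ` {0<..} = {0<..}"
    and "0 < z" "f 1 \<le> y" "y \<le> f z"
  shows "z \<le> inv_into {0<..} f y \<and> inv_into {0<..} f y \<le> 1"
proof -
  have less: "f b < f a" if "0 < a" "a < b" for a b
    using monotone_onD[OF anti] that by simp
  have "0 < f 1" using imageI[of 1 "{0<..}" f] onto by auto
  then have "y \<in> f ` {0<..}" using onto assms(4) by auto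
  then have "inv_into {0<..} f y > 0" "f (inv_into {0<..} f y) = y"
    using inv_into_into[of y f "{0<..}"] f_inv_into_f[of y f "{0<..}"] by auto
  then show ?thesis
    using assms(3-5) less[of "inv_into {0<..} f y" z] less[of 1 "inv_into {0<..} f y"] by force
qed

lemma ex1_root_strict_antimono:
  fixes g :: "real \<Rightarrow> real"
  assumes anti: "strict_antimono_on {0<..1} g" and cont: "continuous_on {x0..1} g"
    and "0 < x0" "x0 \<le> 1" "g 1 \<le> y" "y \<le> g x0"
  shows "\<exists>!x. 0 < x \<and> x \<le> 1 \<and> g x = y"
proof -
  obtain x where x: "x0 \<le> x" "x \<le> 1" "g x = y"
    using IVT2'[of g 1 y x0] assms by auto
  have "inj_on g {0<..1}" using anti by (simp add: strict_antimono_iff_antimono)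
  then show ?thesis using x \<open>0 < x0\<close> by (intro ex1I[of _ x]) (auto dest: inj_onD)
qed

lemma consumption_deviation_le:
  fixes x z d r dbar rbar q :: real
  assumes "0 \<le> z" "z \<le> x" "x \<le> 1" "0 \<le> d" "d \<le> dbar" "0 \<le> r" "r \<le> rbar" "0 \<le> q"
  shows "\<bar>d * x + r * z - q\<bar> \<le> max \<bar>q - dbar - rbar\<bar> q"
proof -
  have "d * x \<le> dbar" "r * z \<le> rbar"
    using assms mult_mono[of d dbar x 1] mult_mono[of r rbar z 1] by auto
  moreover have "0 \<le> d * x" "0 \<le> r * z" using assms by auto
  ultimately show ?thesis by (auto simp: abs_if)
qed

locale decision_rule_setting =
  fixes d r c p th b lam :: real and du de :: "real \<Rightarrow> real"
  assumes d_nonneg: "0 \<le> d" and r_nonneg: "0 \<le> r" and lam_nonneg: "0 \<le> lam"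
    and c_pos: "0 < c" and p_pos: "0 < p" and th_pos: "0 < th" and b_pos: "0 < b"
    and du_antimono: "strict_antimono_on {0<..} du" and du_onto: "du ` {0<..} = {0<..}"
    and de_cont: "continuous_on {0..} de" and de_mono: "strict_mono_on {0..} de"
    and de_onto: "de ` {0..} = {0..}"
begin

lemma du_less: "0 < x \<Longrightarrow> x < y \<Longrightarrow> du y < du x"
  using monotone_onD[OF du_antimono] by simp

lemma de_less: "0 \<le> x \<Longrightarrow> x < y \<Longrightarrow> de x < de y"
  using strict_mono_onD[OF de_mono] by simp

lemma du_pos: "0 < x \<Longrightarrow> 0 < du x"
  using du_onto by auto

lemma de_c_pos: "0 < de c"
  using de_less[of 0 c] c_pos strict_mono_onto_zero[OF de_mono de_onto] by simp

lemma de_a_fun: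
  "0 < c * a_fun c p r de b lam \<and> de (c * a_fun c p r de b lam) = (p * c + r * lam) / (b * c)"
proof -
  define y where "y = (p * c + r * lam) / (b * c)"
  have "0 < y" unfolding y_def
    using p_pos c_pos r_nonneg lam_nonneg b_pos by (intro divide_pos_pos add_pos_nonneg) auto
  then have "y \<in> de ` {0..}" using de_onto by auto
  then have "0 \<le> inv_into {0..} de y" "de (inv_into {0..} de y) = y"
    using inv_into_into[of y de "{0..}"] f_inv_into_f[of y de "{0..}"] by auto
  moreover have "c * a_fun c p r de b lam = inv_into {0..} de y"
    using c_pos by (simp add: a_fun_def y_def)
  ultimately show ?thesis
    using \<open>0 < y\<close> strict_mono_onto_zero[OF de_mono de_onto] unfolding y_def
    by (metis order_le_less)
qed

lemma a_fun_pos: "0 < a_fun c p r de b lam"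
  using de_a_fun c_pos by (simp add: zero_less_mult_iff)

lemma a_fun_le_one:
  assumes "(p * c + r * lam) / (c * de c) \<le> b"
  shows "a_fun c p r de b lam \<le> 1"
proof -
  have "(p * c + r * lam) / (b * c) \<le> de c"
    using assms c_pos b_pos de_c_pos by (simp add: field_simps)
  then have "\<not> c < c * a_fun c p r de b lam"
    using de_a_fun de_less[of c "c * a_fun c p r de b lam"] c_pos by auto
  then show ?thesis using c_pos by simp
qed

text \<open>
  Outside regions I--III the rule W returns the root below; it exists because \<open>u'\<close> maps
  \<open>(0, \<infinity>)\<close> onto \<open>(0, \<infinity>)\<close> and hence blows up near 0.
\<close>
lemma region_IV_root:
  assumes "th * du 1 - b * c * de c \<le> y"
  shows "\<exists>!x. 0 < x \<and> x \<le> 1 \<and> th * du x - b * c * de (x * c) = y"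
proof -
  define g where "g x = th * du x - b * c * de (x * c)" for x
  have anti: "strict_antimono_on {0<..1} g"
  proof (rule monotone_onI)
    fix x x' :: real assume "x \<in> {0<..1}" "x' \<in> {0<..1}" "x < x'"
    then have "du x' < du x" "de (x * c) < de (x' * c)"
      using du_less de_less[of "x * c" "x' * c"] c_pos by auto
    then show "g x' < g x"
      unfolding g_def using th_pos b_pos c_pos
      by (smt (verit) mult_strict_left_mono mult_pos_pos)
  qed
  have "max (du 1 + 1) ((y + b * c * de c + 1) / th) \<in> du ` {0<..}"
    using du_onto du_pos[of 1] by auto
  then obtain x0 where x0: "0 < x0" "du x0 = max (du 1 + 1) ((y + b * c * de c + 1) / th)"
    by auto
  have "x0 < 1"
    using du_less[of 1 x0] x0 by (cases x0 "1::real" rule: linorder_cases) auto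
  have "(y + b * c * de c + 1) / th \<le> du x0" using x0 by simp
  then have "y + b * c * de c + 1 \<le> th * du x0"
    using th_pos by (simp add: pos_divide_le_eq mult.commute)
  moreover have "de (x0 * c) \<le> de c" using de_less[of "x0 * c" c] x0 \<open>x0 < 1\<close> c_pos by simp
  ultimately have "y \<le> g x0"
    unfolding g_def using b_pos c_pos by (smt (verit) mult_left_mono mult_pos_pos)
  have "continuous_on {x0..1} du"
    using x0 by (intro continuous_on_subset[OF continuous_on_strict_antimono_onto[OF du_antimono du_onto]])
      auto
  moreover have "continuous_on {x0..1} (\<lambda>x. de (x * c))"
    by (rule continuous_on_compose2[OF de_cont])
      (use x0 c_pos in \<open>auto intro!: continuous_on_mult_right continuous_on_id\<close>)
  ultimately have "continuous_on {x0..1} g" unfolding g_def by (intro continuous_intros)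
  with anti show ?thesis
    using \<open>y \<le> g x0\<close> assms x0 \<open>x0 < 1\<close> ex1_root_strict_antimono[of g x0 y]
    unfolding g_def by auto
qed

lemma W_feasible:
  defines "w \<equiv> W d r c p th b du de lam"
  shows "0 \<le> snd w \<and> snd w \<le> fst w \<and> fst w \<le> 1"
proof -
  define a where "a = a_fun c p r de b lam"
  define X where "X = X_fun c p d r lam"
  define thr where "thr = (p * c + r * lam) / (c * de c)"
  have w_eq: "w = (if th > (b * c * de c + d * lam) / du 1 \<and> b < thr then (1, 0)
      else if th > X / du 1 \<and> b \<ge> thr then (1, 1 - a)
      else if X / du a \<le> th \<and> th \<le> X / du 1 then
        (inv_into {0<..} du (X / th), inv_into {0<..} du (X / th) - a)
      else (THE x. 0 < x \<and> x \<le> 1 \<and> th * du x - b * c * de (x * c) = d * lam, 0))"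
    by (simp add: w_def W_def Let_def a_def X_def thr_def)
  have "0 < a" using a_fun_pos by (simp add: a_def)
  have "0 < X" unfolding X_def X_fun_def
    using p_pos c_pos d_nonneg r_nonneg lam_nonneg by (intro add_pos_nonneg) auto
  consider (I) "th > (b * c * de c + d * lam) / du 1 \<and> b < thr"
    | (II) "\<not> (th > (b * c * de c + d * lam) / du 1 \<and> b < thr)" "th > X / du 1 \<and> b \<ge> thr"
    | (III) "\<not> (th > (b * c * de c + d * lam) / du 1 \<and> b < thr)" "\<not> (th > X / du 1 \<and> b \<ge> thr)"
        "X / du a \<le> th \<and> th \<le> X / du 1"
    | (IV) "\<not> (th > (b * c * de c + d * lam) / du 1 \<and> b < thr)" "\<not> (th > X / du 1 \<and> b \<ge> thr)"
        "\<not> (X / du a \<le> th \<and> th \<le> X / du 1)"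
    by blast
  then show ?thesis
  proof cases
    case I
    then show ?thesis by (simp add: w_eq)
  next
    case II
    then have "a \<le> 1" using a_fun_le_one by (simp add: a_def thr_def)
    with II \<open>0 < a\<close> show ?thesis by (simp add: w_eq)
  next
    case III
    then have "du 1 \<le> X / th" "X / th \<le> du a"
      using th_pos du_pos[of 1] du_pos[OF \<open>0 < a\<close>] by (simp_all add: field_simps)
    then have "a \<le> inv_into {0<..} du (X / th) \<and> inv_into {0<..} du (X / th) \<le> 1"
      using inv_into_strict_antimono_between[OF du_antimono du_onto \<open>0 < a\<close>] by blast
    with III \<open>0 < a\<close> show ?thesis by (simp add: w_eq)
  next
    case IV
    have "th * du 1 - b * c * de c \<le> d * lam"
    proof (rule ccontr)
      assume big: "\<not> ?thesis"
      then have "th > (b * c * de c + d * lam) / du 1" using du_pos[of 1] by (simp add: field_simps)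
      then have "b \<ge> thr" using IV by auto
      then have "p * c + r * lam \<le> b * c * de c" using c_pos de_c_pos by (simp add: thr_def field_simps)
      then have "th > X / du 1"
        using big du_pos[of 1] by (simp add: X_def X_fun_def field_simps)
      then show False using IV \<open>b \<ge> thr\<close> by auto
    qed
    then have "\<exists>!x. 0 < x \<and> x \<le> 1 \<and> th * du x - b * c * de (x * c) = d * lam"
      by (rule region_IV_root)
    from theI'[OF this] show ?thesis
      unfolding w_eq if_not_P[OF IV(1)] if_not_P[OF IV(2)] if_not_P[OF IV(3)] by simp
  qed
qed

lemma projected_price_step_le:
  defines "w \<equiv> W d r c p th b du de lam"
  assumes "d \<le> dbar" "r \<le> rbar" "0 \<le> q" "0 \<le> eta" "lam \<le> fee"
  shows "\<bar>proj fee (lam + eta * (d * fst w + r * snd w - q)) - lam\<bar> \<le> eta * max \<bar>q - dbar - rbar\<bar> q"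
  using W_feasible assms d_nonneg r_nonneg lam_nonneg unfolding w_def
  by (intro projected_step_le consumption_deviation_le) auto

end

theorem mainTheorem9:
  fixes T :: nat and Q fee dbar rbar :: real
    and d r c p theta beta :: "nat \<Rightarrow> real"
    and u e du de :: "nat \<Rightarrow> real \<Rightarrow> real"
    and eta :: "nat \<Rightarrow> real"
    and xs zs :: "nat \<Rightarrow> real"
    and lamstar :: real
    and lamhat :: "nat \<Rightarrow> real"
  defines "q \<equiv> Q / real T"
  defines "ft \<equiv> (\<lambda>t x z. theta t * u t x - beta t * e t ((x - z) * c t) - p t * c t * z)"
  defines "ht \<equiv> (\<lambda>t x z. d t * x + r t * z)"
  defines "L \<equiv> (\<lambda>t x z lam. ft t x z - lam * (ht t x z - q))"
  defines "S \<equiv> (\<lambda>x z. (\<Sum>t=1..T. ft t (x t) (z t))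
                     - fee * max 0 ((\<Sum>t=1..T. ht t (x t) (z t)) - Q))"
  defines "Xi \<equiv> max \<bar>q - dbar - rbar\<bar> q"
  defines "l \<equiv> (\<lambda>t. q - ht t (xs t) (zs t))"
  defines "lbar \<equiv> (1 / real T) * (\<Sum>t=1..T. l t)"
  defines "Psi \<equiv> Max ((\<lambda>t. \<bar>real t * lbar - (\<Sum>i=1..t. l i)\<bar>) ` {1..T})"
  assumes T_pos: "T \<ge> 1" and Q_pos: "Q > 0" and pi_pos: "fee > 0"
    and dbar_nn: "dbar \<ge> 0" and rbar_nn: "rbar \<ge> 0"
    and d_rng: "\<forall>t\<in>{1..T}. 0 \<le> d t \<and> d t \<le> dbar"
    and r_rng: "\<forall>t\<in>{1..T}. 0 \<le> r t \<and> r t \<le> rbar"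
    and pos: "\<forall>t\<in>{1..T}. c t > 0 \<and> p t > 0 \<and> theta t > 0 \<and> beta t > 0"
    and u_cont: "\<forall>t\<in>{1..T}. continuous_on {0..} (u t)"
    and u_mono: "\<forall>t\<in>{1..T}. mono_on {0..} (u t)"
    and u_conc: "\<forall>t\<in>{1..T}. strict_concave_on {0..} (u t)"
    and u_deriv: "\<forall>t\<in>{1..T}. \<forall>x>0. (u t has_real_derivative du t x) (at x)"
    and du_dec: "\<forall>t\<in>{1..T}. strict_antimono_on {0<..} (du t)"
    and du_bij: "\<forall>t\<in>{1..T}. bij_betw (du t) {0<..} {0<..}"
    and e_mono: "\<forall>t\<in>{1..T}. mono_on {0..} (e t)"
    and e_conv: "\<forall>t\<in>{1..T}. strict_convex_on {0..} (e t)"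
    and e_deriv: "\<forall>t\<in>{1..T}. \<forall>x\<ge>0. (e t has_real_derivative de t x) (at x within {0..})"
    and de_cont: "\<forall>t\<in>{1..T}. continuous_on {0..} (de t)"
    and de_inc: "\<forall>t\<in>{1..T}. strict_mono_on {0..} (de t)"
    and de_bij: "\<forall>t\<in>{1..T}. bij_betw (de t) {0..} {0..}"
    and eta_pos: "\<forall>t\<in>{1..T}. eta t > 0"
    and opt_feas: "\<forall>t\<in>{1..T}. 0 \<le> zs t \<and> zs t \<le> xs t \<and> xs t \<le> 1"
    and opt_max: "\<forall>x z. (\<forall>t\<in>{1..T}. 0 \<le> z t \<and> z t \<le> x t \<and> x t \<le> 1)
                     \<longrightarrow> S x z \<le> S xs zs"
    and lamstar_rng: "0 \<le> lamstar \<and> lamstar \<le> fee"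
    and lamstar_min: "\<forall>lam. 0 \<le> lam \<and> lam \<le> fee \<longrightarrow>
                     (\<Sum>t=1..T. L t (xs t) (zs t) lamstar) \<le> (\<Sum>t=1..T. L t (xs t) (zs t) lam)"
    and lamhat_1: "lamhat 1 = 0"
    and lamhat_step: "\<forall>t\<in>{1..T}.
        lamhat (t + 1) = proj fee (lamhat t + eta t *
          (ht t (fst (W (d t) (r t) (c t) (p t) (theta t) (beta t) (du t) (de t) (lamhat t)))
                (snd (W (d t) (r t) (c t) (p t) (theta t) (beta t) (du t) (de t) (lamhat t))) - q))"
  shows "(\<Sum>t=1..T. L t (xs t) (zs t) lamstar - L t (xs t) (zs t) (lamhat t))
           \<le> Xi * Psi * (\<Sum>t=1..T. eta t)"
proof -
  have "0 \<le> q" using Q_pos by (simp add: q_def)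
  have lam_range: "\<forall>t\<in>{1..T}. 0 \<le> lamhat t \<and> lamhat t \<le> fee"
    using projected_recursion_range[OF _ lamhat_1 lamhat_step] pi_pos by auto
  have steps: "\<forall>t\<in>{1..T}. \<bar>lamhat (t + 1) - lamhat t\<bar> \<le> eta t * Xi"
  proof
    fix t assume t: "t \<in> {1..T}"
    have "decision_rule_setting (d t) (r t) (c t) (p t) (theta t) (beta t) (lamhat t) (du t) (de t)"
      using t d_rng r_rng pos lam_range du_dec du_bij de_cont de_inc de_bij
      by unfold_locales (auto simp: bij_betw_imp_surj_on)
    then show "\<bar>lamhat (t + 1) - lamhat t\<bar> \<le> eta t * Xi"
      unfolding lamhat_step[rule_format, OF t] ht_def Xi_def
      using t d_rng r_rng eta_pos lam_range \<open>0 \<le> q\<close>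
      by (intro decision_rule_setting.projected_price_step_le) (auto simp: less_imp_le)
  qed
  have L_affine: "L t (xs t) (zs t) lam = ft t (xs t) (zs t) + lam * l t" for t lam
    by (simp add: L_def l_def algebra_simps)
  have "\<forall>y. 0 \<le> y \<and> y \<le> fee \<longrightarrow> lamstar * (\<Sum>t=1..T. l t) \<le> y * (\<Sum>t=1..T. l t)"
    using lamstar_min by (simp add: L_affine sum.distrib sum_distrib_left)
  moreover have "\<forall>t\<in>{1..T}. \<bar>real t * ((\<Sum>i=1..T. l i) / T) - (\<Sum>i=1..t. l i)\<bar> \<le> Psi"
    unfolding Psi_def lbar_def by (auto intro: Max_ge)
  ultimately have "(\<Sum>t=1..T. (lamstar - lamhat t) * l t) \<le> Xi * Psi * (\<Sum>t=1..T. eta t)"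
    using price_regret_le[OF T_pos lam_range _ steps] by blast
  then show ?thesis by (simp add: L_affine algebra_simps)
qed

end
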